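(* Assume (H1), (H2) and let $\mu$ be a probability measure on $[0,1]$ with a strictly positive Lebesgue density. Then almost surely, for every $\epsilon>0$, the function $U^\epsilon$ on $\Theta$ defined by \[ U^\epsilon(\xi)=\int_0^1\Big[\log\Big(\int_0^1\sigma_t^x(\xi)^2\mu(dx)+\epsilon\Big)+\frac{\int_0^1\sigma_t^x(\theta)^2\mu(dx)+\epsilon}{\int_0^1\sigma_t^x(\xi)^2\mu(dx)+\epsilon}\Big]dt \] has $\xi=\theta$ as its unique minimizer.
   Context: Let $\Theta\subset\mathbb{R}^q$ be compact and convex. Let $(\Omega,\mathscr F,(\mathscr F_t)_{t\in[0,1]},P)$ be a filtered probability space carrying a one-dimensional $(\mathscr F_t)$-standard Brownian motion $W$. Let $k:\Theta\times[0,1]\to\mathbb{R}$ be a kernel, extended by $k(\xi,t)=0$ for $t<0$. Fix a true parameter $\theta\in\Theta$ and a deterministic, continuous, strictly positive function $u\mapsto V_0^u$ on $[0,1]$. For $0\le t\le u\le1$ set $V_t^u=V_0^u\exp\big(\int_0^t k(\theta,u-s)\,dW_s-\tfrac12\int_0^t k(\theta,u-s)^2ds\big)$, $V_t^u=0$ for $t>u$. For $\xi\in\Theta$, $0\le t<x\le1$ let $\sigma_t^x(\xi)=\int_t^x k(\xi,u-t)V_t^u\,du$, and $\sigma_t^x(\xi)=0$ for $t\ge x$. (H1): $k\in C^{2,2}(\Theta\times[0,1])$ and $k>0$. (H2): for all $\xi\ne\xi'$ in $\Theta$ there is $\delta>0$ such that $k(\xi,\cdot)-k(\xi',\cdot)$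 has a constant nonzero sign on $(0,\delta)$. *)

theory Defs
  imports "HOL-Probability.Probability"
begin

definition filtered_prob_space :: "'a measure \<Rightarrow> (real \<Rightarrow> 'a measure) \<Rightarrow> bool" where
  "filtered_prob_space M F \<longleftrightarrow> prob_space M \<and>
     (\<forall>t\<in>{0..1}. subalgebra M (F t)) \<and>
     (\<forall>s\<in>{0..1}. \<forall>t\<in>{0..1}. s \<le> t \<longrightarrow> sets (F s) \<subseteq> sets (F t))"

definition std_BM :: "'a measure \<Rightarrow> (real \<Rightarrow> 'a measure) \<Rightarrow> (real \<Rightarrow> 'a \<Rightarrow> real) \<Rightarrow> bool" where
  "std_BM M F W \<longleftrightarrow> filtered_prob_space M F \<and>
     (\<forall>t\<in>{0..1}. W t \<in> borel_measurable (F t)) \<and>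
     (AE \<omega> in M. W 0 \<omega> = 0) \<and>
     (AE \<omega> in M. continuous_on {0..1} (\<lambda>t. W t \<omega>)) \<and>
     (\<forall>s\<in>{0..1}. \<forall>t\<in>{0..1}. s < t \<longrightarrow>
        distributed M lborel (\<lambda>\<omega>. W t \<omega> - W s \<omega>) (normal_density 0 (sqrt (t - s))) \<and>
        prob_space.indep_set M (sets (F s))
          (sets (vimage_algebra (space M) (\<lambda>\<omega>. W t \<omega> - W s \<omega>) borel)))"

text \<open>Partial derivative operators on functions of (xi, t): Some v = derivative in xi
  in direction v, None = derivative in t.\<close>
definition pdir :: "('p::real_normed_vector \<Rightarrow> real \<Rightarrow> real) \<Rightarrow> 'p option \<Rightarrow> 'p \<Rightarrow> real \<Rightarrow> real" where
  "pdir f d = (case d of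
      Some v \<Rightarrow> (\<lambda>x t. deriv (\<lambda>h. f (x + h *\<^sub>R v) t) 0)
    | None \<Rightarrow> (\<lambda>x t. deriv (\<lambda>s. f x s) t))"

definition pdir_differentiable :: "('p::real_normed_vector \<Rightarrow> real \<Rightarrow> real) \<Rightarrow> 'p option \<Rightarrow> 'p \<Rightarrow> real \<Rightarrow> bool" where
  "pdir_differentiable f d x t = (case d of
      Some v \<Rightarrow> (\<lambda>h. f (x + h *\<^sub>R v) t) field_differentiable (at 0)
    | None \<Rightarrow> (\<lambda>s. f x s) field_differentiable (at t))"

fun papply :: "('p::real_normed_vector \<Rightarrow> real \<Rightarrow> real) \<Rightarrow> 'p option list \<Rightarrow> 'p \<Rightarrow> real \<Rightarrow> real" where
  "papply f [] = f"
| "papply f (d # ds) = pdir (papply f ds) d"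

definition admissible22 :: "'p::euclidean_space option list \<Rightarrow> bool" where
  "admissible22 ds \<longleftrightarrow> (\<forall>d\<in>set ds. d = None \<or> (\<exists>v\<in>Basis. d = Some v)) \<and>
     length (filter (\<lambda>d. d = None) ds) \<le> 2 \<and> length (filter (\<lambda>d. d \<noteq> None) ds) \<le> 2"

definition C22_on :: "('p::euclidean_space \<Rightarrow> real \<Rightarrow> real) \<Rightarrow> 'p set \<Rightarrow> real set \<Rightarrow> bool" where
  "C22_on k A T \<longleftrightarrow> (\<exists>S K. open S \<and> A \<times> T \<subseteq> S \<and>
     (\<forall>x\<in>A. \<forall>t\<in>T. K x t = k x t) \<and>
     (\<forall>ds. admissible22 ds \<longrightarrow> continuous_on S (\<lambda>z. papply K ds (fst z) (snd z))) \<and>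
     (\<forall>d ds. admissible22 (d # ds) \<longrightarrow> (\<forall>z\<in>S. pdir_differentiable (papply K ds) d (fst z) (snd z))))"

definition kdot :: "('p \<Rightarrow> real \<Rightarrow> real) \<Rightarrow> 'p \<Rightarrow> real \<Rightarrow> real" where
  "kdot k \<xi> r = vector_derivative (\<lambda>s. k \<xi> s) (at r within {0..1})"

text \<open>Wiener integral int_0^t k(theta,u-s) dW_s of the deterministic C^1 integrand,
  realised pathwise via integration by parts (valid for 0 <= t <= u <= 1).\<close>
definition wiener_int :: "('p \<Rightarrow> real \<Rightarrow> real) \<Rightarrow> 'p \<Rightarrow> (real \<Rightarrow> 'a \<Rightarrow> real) \<Rightarrow> real \<Rightarrow> real \<Rightarrow> 'a \<Rightarrow> real" where
  "wiener_int k \<theta> W t u \<omega> =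
     k \<theta> (u - t) * W t \<omega> - k \<theta> u * W 0 \<omega> + (LBINT s=0..t. W s \<omega> * kdot k \<theta> (u - s))"

definition Vproc :: "('p \<Rightarrow> real \<Rightarrow> real) \<Rightarrow> 'p \<Rightarrow> (real \<Rightarrow> real) \<Rightarrow> (real \<Rightarrow> 'a \<Rightarrow> real) \<Rightarrow> real \<Rightarrow> real \<Rightarrow> 'a \<Rightarrow> real" where
  "Vproc k \<theta> V0 W t u \<omega> = (if t \<le> u then
      V0 u * exp (wiener_int k \<theta> W t u \<omega> - 1/2 * (LBINT s=0..t. (k \<theta> (u - s))\<^sup>2))
    else 0)"

definition sigma_fwd :: "('p \<Rightarrow> real \<Rightarrow> real) \<Rightarrow> 'p \<Rightarrow> (real \<Rightarrow> real) \<Rightarrow> (real \<Rightarrow> 'a \<Rightarrow> real) \<Rightarrow> real \<Rightarrow> real \<Rightarrow> 'p \<Rightarrow> 'a \<Rightarrow> real" where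
  "sigma_fwd k \<theta> V0 W t x \<xi> \<omega> = (if t < x then
      (LBINT u=t..x. k \<xi> (u - t) * Vproc k \<theta> V0 W t u \<omega>)
    else 0)"

definition Ueps :: "('p \<Rightarrow> real \<Rightarrow> real) \<Rightarrow> 'p \<Rightarrow> (real \<Rightarrow> real) \<Rightarrow> (real \<Rightarrow> 'a \<Rightarrow> real) \<Rightarrow> real measure \<Rightarrow> real \<Rightarrow> 'p \<Rightarrow> 'a \<Rightarrow> real" where
  "Ueps k \<theta> V0 W \<mu> \<epsilon> \<xi> \<omega> =
     (LBINT t=0..1.
        ln ((\<integral>x. (sigma_fwd k \<theta> V0 W t x \<xi> \<omega>)\<^sup>2 \<partial>\<mu>) + \<epsilon>)
        + ((\<integral>x. (sigma_fwd k \<theta> V0 W t x \<theta> \<omega>)\<^sup>2 \<partial>\<mu>) + \<epsilon>)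
          / ((\<integral>x. (sigma_fwd k \<theta> V0 W t x \<xi> \<omega>)\<^sup>2 \<partial>\<mu>) + \<epsilon>))"

end

theory Submission
  imports Defs
begin

text \<open>
  Write \<open>A\<^sub>\<xi>(t) = \<integral> \<sigma>\<^sub>t\<^sup>x(\<xi>)\<^sup>2 \<mu>(dx)\<close>. Since
  \<open>ln a + c / a \<ge> ln c + 1\<close> for \<open>a, c > 0\<close>, with equality only for \<open>a = c\<close>, the integrand of
  \<open>U\<^sup>\<epsilon>(\<xi>)\<close> dominates that of \<open>U\<^sup>\<epsilon>(\<theta>)\<close> for every \<open>t\<close>, so \<open>\<theta>\<close> is a minimizer. For
  \<open>\<xi> \<noteq> \<theta>\<close>, (H2) gives \<open>\<delta> > 0\<close> such that \<open>k(\<xi>,\<cdot>) - k(\<theta>,\<cdot>)\<close> has a fixed sign on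
  \<open>(0, \<delta>)\<close>. If \<open>1 - \<delta> < t < x \<le> 1\<close>, every lag \<open>u - t\<close> occurring in \<open>\<sigma>\<^sub>t\<^sup>x\<close> lies in
  \<open>(0, \<delta>)\<close> and \<open>V\<^sub>t\<^sup>u > 0\<close>, so \<open>\<sigma>\<^sub>t\<^sup>x(\<xi>)\<close> and \<open>\<sigma>\<^sub>t\<^sup>x(\<theta>)\<close> are strictly ordered; as
  \<open>\<mu>\<close> has a positive density, \<open>A\<^sub>\<xi>(t) \<noteq> A\<^sub>\<theta>(t)\<close> on \<open>(1 - \<delta>, 1)\<close> and the inequality is
  strict. All integrals involved are finite because a continuous path and the kernel are bounded
  on \<open>[0, 1]\<close>.
\<close>

lemma pred_mem_greaterThanLessThan[measurable (raw)]:
  fixes f g h :: "'a \<Rightarrow> real"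
  assumes [measurable]: "f \<in> borel_measurable M" "g \<in> borel_measurable M" "h \<in> borel_measurable M"
  shows "Measurable.pred M (\<lambda>x. f x \<in> {g x<..<h x})"
  by (simp add: greaterThanLessThan_iff) measurable

declare sets_lborel[measurable_cong]

lemma minimizers_eq_singleton:
  fixes U :: "'a \<Rightarrow> 'b::linorder"
  assumes "\<theta> \<in> \<Theta>" "\<And>\<eta>. \<eta> \<in> \<Theta> \<Longrightarrow> U \<theta> \<le> U \<eta>" "\<And>\<xi>. \<xi> \<in> \<Theta> \<Longrightarrow> \<xi> \<noteq> \<theta> \<Longrightarrow> U \<theta> < U \<xi>"
  shows "{\<xi>\<in>\<Theta>. \<forall>\<eta>\<in>\<Theta>. U \<xi> \<le> U \<eta>} = {\<theta>}"
  using assms by (force simp: not_le[symmetric])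

text \<open>The Gaussian negative log-likelihood of the variance \<open>a + \<epsilon>\<close> at the observation \<open>c + \<epsilon>\<close>.\<close>

definition qlik :: "real \<Rightarrow> real \<Rightarrow> real \<Rightarrow> real" where
  "qlik \<epsilon> c a = ln (a + \<epsilon>) + (c + \<epsilon>) / (a + \<epsilon>)"

lemma qlik_ge:
  assumes "0 \<le> a" "0 \<le> c" "0 < \<epsilon>"
  shows "qlik \<epsilon> c c \<le> qlik \<epsilon> c a"
proof -
  have "ln (c + \<epsilon>) - ln (a + \<epsilon>) \<le> ((c + \<epsilon>) - (a + \<epsilon>)) / (a + \<epsilon>)"
    using assms by (intro ln_diff_le) auto
  also have "\<dots> = (c + \<epsilon>) / (a + \<epsilon>) - 1"
    using assms by (simp add: field_simps)
  finally show ?thesis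
    using assms by (simp add: qlik_def)
qed

lemma qlik_less:
  assumes "0 \<le> a" "0 \<le> c" "0 < \<epsilon>" "a \<noteq> c"
  shows "qlik \<epsilon> c c < qlik \<epsilon> c a"
proof -
  have "ln (c + \<epsilon>) - ln (a + \<epsilon>) < ((c + \<epsilon>) - (a + \<epsilon>)) / (a + \<epsilon>)"
    using assms by (intro ln_diff_less) auto
  also have "\<dots> = (c + \<epsilon>) / (a + \<epsilon>) - 1"
    using assms by (simp add: field_simps)
  finally show ?thesis
    using assms by (simp add: qlik_def)
qed

lemma abs_qlik_le:
  assumes "a \<in> {0..A}" "c \<in> {0..C}" "0 < \<epsilon>"
  shows "\<bar>qlik \<epsilon> c a\<bar> \<le> \<bar>ln \<epsilon>\<bar> + A + \<epsilon> + (C + \<epsilon>) / \<epsilon>"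
proof -
  from assms(1,2) have "0 \<le> a" "a \<le> A" "0 \<le> c" "c \<le> C"
    by auto
  moreover have "ln \<epsilon> \<le> ln (a + \<epsilon>)" "ln (a + \<epsilon>) \<le> a + \<epsilon>"
    using assms ln_le_minus_one[of "a + \<epsilon>"] by auto
  moreover have "(c + \<epsilon>) / (a + \<epsilon>) \<le> (C + \<epsilon>) / \<epsilon>"
    using assms by (intro frac_le) auto
  moreover have "0 \<le> (c + \<epsilon>) / (a + \<epsilon>)"
    using assms by simp
  ultimately show ?thesis
    unfolding qlik_def abs_le_iff using abs_ge_self[of "ln \<epsilon>"] abs_ge_minus_self[of "ln \<epsilon>"] assms
    by linarith
qed

lemma integrable_bounded_on_Ioo:
  fixes g :: "real \<Rightarrow> real"
  assumes [measurable]: "g \<in> borel_measurable borel" and "\<And>s. s \<in> {a<..<b} \<Longrightarrow> \<bar>g s\<bar> \<le> C"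
  shows "integrable lborel (\<lambda>s. indicator {a<..<b} s * g s)"
  by (rule integrableI_bounded_set[where A="{a<..<b}" and B=C])
     (use assms(2) emeasure_lborel_box_finite[of a b] in \<open>auto simp: box_real\<close>)

lemma abs_integral_bounded_on_Ioo:
  fixes g :: "real \<Rightarrow> real"
  assumes [measurable]: "g \<in> borel_measurable borel" and bound: "\<And>s. s \<in> {a<..<b} \<Longrightarrow> \<bar>g s\<bar> \<le> C"
    and "a \<le> b"
  shows "\<bar>LINT s|lborel. indicator {a<..<b} s * g s\<bar> \<le> C * (b - a)"
proof -
  have "integrable lborel (\<lambda>s. C * indicator {a<..<b} s)"
    using \<open>a \<le> b\<close> by (intro integrable_mult_right integrable_real_indicator) auto
  moreover have "integrable lborel (\<lambda>s. indicator {a<..<b} s * g s)"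
    using assms(1) bound by (rule integrable_bounded_on_Ioo)
  ultimately have "\<bar>LINT s|lborel. indicator {a<..<b} s * g s\<bar> \<le> (LINT s|lborel. C * indicator {a<..<b} s)"
    using bound by (intro integral_abs_bound_integral) (auto simp: indicator_def)
  also have "\<dots> = C * (b - a)"
    using \<open>a \<le> b\<close> by simp
  finally show ?thesis .
qed

lemma integral_less_of_less_on_Ioo:
  fixes g h :: "real \<Rightarrow> real"
  assumes "integrable lborel g" "integrable lborel h" "\<And>x. g x \<le> h x"
    and "a < b" "\<And>x. x \<in> {a<..<b} \<Longrightarrow> g x < h x"
  shows "integral\<^sup>L lborel g < integral\<^sup>L lborel h"
proof -
  have "integral\<^sup>L lborel (\<lambda>x. h x - g x) \<noteq> 0"
  proof
    assume "integral\<^sup>L lborel (\<lambda>x. h x - g x) = 0"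
    then have "AE x in lborel. h x - g x = 0"
      using assms(1-3) by (subst (asm) integral_nonneg_eq_0_iff_AE) auto
    then have "AE x in lborel. x \<notin> {a<..<b}"
      by eventually_elim (use assms(5) in force)
    then have "emeasure lborel {a<..<b} = 0"
      by (subst (asm) AE_iff_measurable[of "{a<..<b}"]) auto
    then show False
      using \<open>a < b\<close> by simp
  qed
  moreover have "integral\<^sup>L lborel g \<le> integral\<^sup>L lborel h"
    using assms(1-3) by (rule integral_mono)
  ultimately show ?thesis
    using assms(1,2) by simp
qed

lemma interval_integral_eq_indicator:
  fixes a b :: real and g :: "real \<Rightarrow> real"
  assumes "a \<le> b"
  shows "(LBINT u=a..b. g u) = (LINT u|lborel. indicator {a<..<b} u * g u)"
  using assms unfolding interval_lebesgue_integral_def set_lebesgue_integral_def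
  by (auto intro!: Bochner_Integration.integral_cong)

lemma integrable_of_prob_space_density:
  fixes f :: "'a \<Rightarrow> real"
  assumes "prob_space (density M f)" "f \<in> borel_measurable M" "\<And>x. 0 \<le> f x"
  shows "integrable M f"
proof -
  have "(\<integral>\<^sup>+x. ennreal (f x) \<partial>M) = emeasure (density M f) (space M)"
    using assms(2) by (subst emeasure_density) (auto intro!: nn_integral_cong)
  also have "\<dots> = 1"
    using prob_space.emeasure_space_1[OF assms(1)] by simp
  finally show ?thesis
    unfolding integrable_iff_bounded using assms(2,3) by simp
qed

lemma borel_measurable_indicator_Union_open:
  fixes g :: "'a::second_countable_topology \<Rightarrow> real"
  assumes "\<And>U. U \<in> \<U> \<Longrightarrow> open U"
    and "\<And>U. U \<in> \<U> \<Longrightarrow> (\<lambda>u. indicator U u * g u) \<in> borel_measurable borel"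
  shows "(\<lambda>u. indicator (\<Union>\<U>) u * g u) \<in> borel_measurable borel"
proof -
  obtain \<F> where \<F>: "\<F> \<subseteq> \<U>" "countable \<F>" "\<Union>\<F> = \<Union>\<U>"
    using Lindelof[of \<U>] assms(1) by blast
  have [measurable]: "\<Union>\<U> \<in> sets borel"
    using assms(1) by (intro borel_open open_Union) auto
  show ?thesis
  proof (rule measurable_piecewise_restrict[of "insert (- \<Union>\<U>) \<F>"])
    fix \<Omega> assume \<Omega>: "\<Omega> \<in> insert (- \<Union>\<U>) \<F>"
    then show "\<Omega> \<inter> space borel \<in> sets borel"
      using \<F>(1) assms(1) by auto
    show "(\<lambda>u. indicator (\<Union>\<U>) u * g u) \<in> borel_measurable (restrict_space borel \<Omega>)"
    proof (cases "\<Omega> = - \<Union>\<U>")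
      case True
      then show ?thesis
        by (subst measurable_cong[where g="\<lambda>_. 0"]) (auto simp: space_restrict_space)
    next
      case False
      then have "\<Omega> \<in> \<U>"
        using \<Omega> \<F>(1) by auto
      then have "indicator (\<Union>\<U>) u * g u = indicator \<Omega> u * g u" if "u \<in> \<Omega>" for u
        using that by (auto simp: indicator_def)
      moreover have "(\<lambda>u. indicator \<Omega> u * g u) \<in> borel_measurable (restrict_space borel \<Omega>)"
        using assms(2)[OF \<open>\<Omega> \<in> \<U>\<close>] by (rule measurable_restrict_space1)
      ultimately show ?thesis
        by (subst measurable_cong[where g="\<lambda>u. indicator \<Omega> u * g u"]) (auto simp: space_restrict_space)
    qed
  qed (use \<F> in auto)
qed

text \<open>
  No measurability of \<open>g\<close> is needed: the integral vanishes outside the interval \<open>I\<close> of those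
  \<open>x\<close> for which \<open>g\<close> is integrable on \<open>(t, x)\<close>, and \<open>g\<close> is Borel on the union of these intervals.
\<close>

lemma borel_measurable_indefinite_integral:
  fixes g :: "real \<Rightarrow> real"
  shows "(\<lambda>x. LINT u|lborel. indicator {t<..<x} u * g u) \<in> borel_measurable borel"
proof -
  define I where "I = {x. integrable lborel (\<lambda>u. indicator {t<..<x} u * g u)}"
  define J where "J = (\<Union>x\<in>I. {t<..<x})"
  have "y \<in> I" if "x \<in> I" "y \<le> x" for x y
  proof -
    have "(\<lambda>u. indicator {t<..<y} u * g u) = (\<lambda>u. indicator {t<..<y} u * (indicator {t<..<x} u * g u))"
      using that(2) by (auto simp: indicator_def)
    then show ?thesis
      using integrable_mult_indicator[of "{t<..<y}" lborel "\<lambda>u. indicator {t<..<x} u * g u"] that(1)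
      unfolding I_def by simp
  qed
  then have "is_interval I"
    unfolding is_interval_1 by blast
  then have [measurable]: "I \<in> sets borel"
    by (rule real_interval_borel_measurable)
  have [measurable]: "(\<lambda>u. indicator J u * g u) \<in> borel_measurable borel"
    unfolding J_def using borel_measurable_integrable
    by (intro borel_measurable_indicator_Union_open) (auto simp: I_def)
  have "(LINT u|lborel. indicator {t<..<x} u * g u) =
      indicator I x * (LINT u|lborel. indicator {t<..<x} u * (indicator J u * g u))" for x
  proof (cases "x \<in> I")
    case True
    then have "{t<..<x} \<subseteq> J"
      unfolding J_def by auto
    then show ?thesis
      using True by (auto intro!: Bochner_Integration.integral_cong simp: indicator_def)
  next
    case False
    then show ?thesis
      unfolding I_def by (simp add: not_integrable_integral_eq)
  qed
  then show ?thesis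
    by (simp only:) measurable
qed

section \<open>The contrast for a general positive weight\<close>

text \<open>
  \<open>sigma_of V \<kappa> t x\<close> is \<open>\<sigma>\<^sub>t\<^sup>x\<close> with the weight \<open>V t u\<close> in place of \<open>V\<^sub>t\<^sup>u\<close> and the lag
  kernel \<open>\<kappa> = k(\<xi>,\<cdot>)\<close>; \<open>msq_sigma\<close> and \<open>contrast\<close> are the corresponding
  \<open>\<integral> \<sigma>\<^sup>2 d\<mu>\<close> (with \<open>\<mu> = f dx\<close>) and \<open>U\<^sup>\<epsilon>\<close>, the true kernel being \<open>\<kappa>\<^sub>0\<close>.
\<close>

definition sigma_of :: "(real \<Rightarrow> real \<Rightarrow> real) \<Rightarrow> (real \<Rightarrow> real) \<Rightarrow> real \<Rightarrow> real \<Rightarrow> real" where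
  "sigma_of V \<kappa> t x = (LINT u|lborel. indicator {t<..<x} u * (\<kappa> (u - t) * V t u))"

definition msq_sigma :: "(real \<Rightarrow> real \<Rightarrow> real) \<Rightarrow> (real \<Rightarrow> real) \<Rightarrow> (real \<Rightarrow> real) \<Rightarrow> real \<Rightarrow> real" where
  "msq_sigma V f \<kappa> t = (LINT x|lborel. f x * indicator {0..1} x * (sigma_of V \<kappa> t x)\<^sup>2)"

definition contrast ::
  "(real \<Rightarrow> real \<Rightarrow> real) \<Rightarrow> (real \<Rightarrow> real) \<Rightarrow> (real \<Rightarrow> real) \<Rightarrow> (real \<Rightarrow> real) \<Rightarrow> real \<Rightarrow> real" where
  "contrast V f \<kappa>\<^sub>0 \<kappa> \<epsilon> =
     (LINT t|lborel. indicator {0<..<1} t * qlik \<epsilon> (msq_sigma V f \<kappa>\<^sub>0 t) (msq_sigma V f \<kappa> t))"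

locale bounded_weight =
  fixes V :: "real \<Rightarrow> real \<Rightarrow> real" and B :: real
  assumes V_measurable: "case_prod V \<in> borel_measurable (borel \<Otimes>\<^sub>M borel)"
    and V_range: "\<And>t u. t \<in> {0..1} \<Longrightarrow> V t u \<in> {0..B}"
    and V_pos: "\<And>t u. t \<in> {0..1} \<Longrightarrow> t \<le> u \<Longrightarrow> 0 < V t u"
begin

lemma V_measurable_raw[measurable (raw)]:
  assumes "a \<in> borel_measurable M" "b \<in> borel_measurable M"
  shows "(\<lambda>x. V (a x) (b x)) \<in> borel_measurable M"
  using measurable_compose[OF measurable_Pair[OF assms] V_measurable] by simp

lemma sigma_integrand_range:
  assumes "range \<kappa> \<subseteq> {0..C}" "t \<in> {0..1}"
  shows "\<kappa> r * V t u \<in> {0..C * B}"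
proof -
  have "\<kappa> r \<in> {0..C}" "V t u \<in> {0..B}"
    using assms V_range by blast+
  then show ?thesis
    by (auto intro: mult_mono)
qed

lemma sigma_integrand_integrable:
  assumes [measurable]: "\<kappa> \<in> borel_measurable borel"
    and "range \<kappa> \<subseteq> {0..C}" "t \<in> {0..1}"
  shows "integrable lborel (\<lambda>u. indicator {t<..<x} u * (\<kappa> (u - t) * V t u))"
  using sigma_integrand_range[OF assms(2,3)] by (intro integrable_bounded_on_Ioo) auto

lemma sigma_of_range:
  assumes [measurable]: "\<kappa> \<in> borel_measurable borel"
    and \<kappa>: "range \<kappa> \<subseteq> {0..C}" and t: "t \<in> {0..1}" and "x \<le> 1"
  shows "sigma_of V \<kappa> t x \<in> {0..C * B}"
  unfolding atLeastAtMost_iff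
proof
  show "0 \<le> sigma_of V \<kappa> t x"
    unfolding sigma_of_def using sigma_integrand_range[OF \<kappa> t]
    by (intro Bochner_Integration.integral_nonneg) (auto simp: indicator_def)
  have "C * B \<ge> 0"
    using sigma_integrand_range[OF \<kappa> t] by fastforce
  show "sigma_of V \<kappa> t x \<le> C * B"
  proof (cases "t < x")
    case True
    have "\<bar>sigma_of V \<kappa> t x\<bar> \<le> C * B * (x - t)"
      unfolding sigma_of_def using sigma_integrand_range[OF \<kappa> t] True
      by (intro abs_integral_bounded_on_Ioo) auto
    also have "\<dots> \<le> C * B"
      using \<open>C * B \<ge> 0\<close> t \<open>x \<le> 1\<close> True by (intro mult_left_le) auto
    finally show ?thesis
      by simp
  qed (use \<open>C * B \<ge> 0\<close> in \<open>simp add: sigma_of_def\<close>)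
qed

lemma sigma_of_strict_mono:
  assumes [measurable]: "\<kappa>\<^sub>1 \<in> borel_measurable borel" "\<kappa>\<^sub>2 \<in> borel_measurable borel"
    and "range \<kappa>\<^sub>1 \<subseteq> {0..C\<^sub>1}" "range \<kappa>\<^sub>2 \<subseteq> {0..C\<^sub>2}"
    and less: "\<And>r. r \<in> {0<..<\<delta>} \<Longrightarrow> \<kappa>\<^sub>2 r < \<kappa>\<^sub>1 r"
    and t: "t \<in> {0..1}" and "t < x" "x \<le> t + \<delta>"
  shows "sigma_of V \<kappa>\<^sub>2 t x < sigma_of V \<kappa>\<^sub>1 t x"
  unfolding sigma_of_def
proof (rule integral_less_of_less_on_Ioo)
  have "\<kappa>\<^sub>2 (u - t) * V t u < \<kappa>\<^sub>1 (u - t) * V t u" if "u \<in> {t<..<x}" for u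
    using that less[of "u - t"] V_pos[OF t, of u] \<open>x \<le> t + \<delta>\<close> by simp
  then show "indicator {t<..<x} u * (\<kappa>\<^sub>2 (u - t) * V t u) \<le> indicator {t<..<x} u * (\<kappa>\<^sub>1 (u - t) * V t u)"
    and "u \<in> {t<..<x} \<Longrightarrow>
      indicator {t<..<x} u * (\<kappa>\<^sub>2 (u - t) * V t u) < indicator {t<..<x} u * (\<kappa>\<^sub>1 (u - t) * V t u)" for u
    by (auto simp: indicator_def less_imp_le)
qed (use \<open>t < x\<close> sigma_integrand_integrable[OF assms(1,3) t] sigma_integrand_integrable[OF assms(2,4) t]
     in auto)

end

locale contrast_setting = bounded_weight V B for V B +
  fixes f :: "real \<Rightarrow> real"
  assumes f_measurable[measurable]: "f \<in> borel_measurable borel"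
    and f_nonneg: "\<And>x. 0 \<le> f x"
    and f_pos: "\<And>x. x \<in> {0..1} \<Longrightarrow> 0 < f x"
    and f_integrable: "integrable lborel f"
begin

lemma msq_sigma_measurable[measurable]:
  assumes [measurable]: "\<kappa> \<in> borel_measurable borel"
  shows "msq_sigma V f \<kappa> \<in> borel_measurable borel"
  unfolding msq_sigma_def sigma_of_def by measurable

lemma msq_integrand_bound:
  assumes [measurable]: "\<kappa> \<in> borel_measurable borel"
    and \<kappa>: "range \<kappa> \<subseteq> {0..C}" and t: "t \<in> {0..1}"
  shows "f x * indicator {0..1} x * (sigma_of V \<kappa> t x)\<^sup>2 \<in> {0..(C * B)\<^sup>2 * f x}"
proof (cases "x \<in> {0..1}")
  case True
  then have "sigma_of V \<kappa> t x \<in> {0..C * B}"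
    using sigma_of_range[OF assms] by simp
  then have "(sigma_of V \<kappa> t x)\<^sup>2 \<le> (C * B)\<^sup>2"
    by (auto intro: power_mono)
  then show ?thesis
    using True f_nonneg[of x] by (simp add: mult_left_mono mult.commute)
qed (simp add: f_nonneg)

lemma msq_integrand_integrable:
  assumes [measurable]: "\<kappa> \<in> borel_measurable borel"
    and "range \<kappa> \<subseteq> {0..C}" "t \<in> {0..1}"
  shows "integrable lborel (\<lambda>x. f x * indicator {0..1} x * (sigma_of V \<kappa> t x)\<^sup>2)"
proof (rule Bochner_Integration.integrable_bound)
  show "integrable lborel (\<lambda>x. (C * B)\<^sup>2 * f x)"
    using f_integrable by simp
  show "AE x in lborel. norm (f x * indicator {0..1} x * (sigma_of V \<kappa> t x)\<^sup>2) \<le> norm ((C * B)\<^sup>2 * f x)"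
  proof (rule AE_I2)
    fix x
    have "f x * indicator {0..1} x * (sigma_of V \<kappa> t x)\<^sup>2 \<in> {0..(C * B)\<^sup>2 * f x}"
      by (rule msq_integrand_bound[OF assms])
    then show "norm (f x * indicator {0..1} x * (sigma_of V \<kappa> t x)\<^sup>2) \<le> norm ((C * B)\<^sup>2 * f x)"
      by simp
  qed
qed (unfold sigma_of_def, measurable)

lemma msq_sigma_range:
  assumes [measurable]: "\<kappa> \<in> borel_measurable borel"
    and "range \<kappa> \<subseteq> {0..C}" "t \<in> {0..1}"
  shows "msq_sigma V f \<kappa> t \<in> {0..(C * B)\<^sup>2 * integral\<^sup>L lborel f}"
  unfolding atLeastAtMost_iff
proof
  show "0 \<le> msq_sigma V f \<kappa> t"
    unfolding msq_sigma_def using msq_integrand_bound[OF assms]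
    by (intro Bochner_Integration.integral_nonneg) auto
  have "msq_sigma V f \<kappa> t \<le> (LINT x|lborel. (C * B)\<^sup>2 * f x)"
    unfolding msq_sigma_def using msq_integrand_bound[OF assms] f_integrable
    by (intro integral_mono msq_integrand_integrable[OF assms]) auto
  then show "msq_sigma V f \<kappa> t \<le> (C * B)\<^sup>2 * integral\<^sup>L lborel f"
    by simp
qed

lemma msq_sigma_strict_mono:
  assumes [measurable]: "\<kappa>\<^sub>1 \<in> borel_measurable borel" "\<kappa>\<^sub>2 \<in> borel_measurable borel"
    and \<kappa>: "range \<kappa>\<^sub>1 \<subseteq> {0..C\<^sub>1}" "range \<kappa>\<^sub>2 \<subseteq> {0..C\<^sub>2}"
    and less: "\<And>r. r \<in> {0<..<\<delta>} \<Longrightarrow> \<kappa>\<^sub>2 r < \<kappa>\<^sub>1 r"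
    and t: "t \<in> {0..<1}" "1 \<le> t + \<delta>"
  shows "msq_sigma V f \<kappa>\<^sub>2 t < msq_sigma V f \<kappa>\<^sub>1 t"
  unfolding msq_sigma_def
proof (rule integral_less_of_less_on_Ioo[where a=t and b=1])
  have t01: "t \<in> {0..1}"
    using t by auto
  have sq_less: "(sigma_of V \<kappa>\<^sub>2 t x)\<^sup>2 < (sigma_of V \<kappa>\<^sub>1 t x)\<^sup>2" if "t < x" "x \<le> 1" for x
  proof -
    have "sigma_of V \<kappa>\<^sub>2 t x < sigma_of V \<kappa>\<^sub>1 t x"
      using that t by (intro sigma_of_strict_mono[OF assms(1-4) less t01]) auto
    moreover have "0 \<le> sigma_of V \<kappa>\<^sub>2 t x"
      using sigma_of_range[OF assms(2) \<kappa>(2) t01 \<open>x \<le> 1\<close>] by simp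
    ultimately show ?thesis
      by (simp add: power_strict_mono)
  qed
  have sq_le: "(sigma_of V \<kappa>\<^sub>2 t x)\<^sup>2 \<le> (sigma_of V \<kappa>\<^sub>1 t x)\<^sup>2" if "x \<le> 1" for x
  proof (cases "t < x")
    case True
    then show ?thesis
      using sq_less[OF True that] by simp
  qed (simp add: sigma_of_def)
  show "f x * indicator {0..1} x * (sigma_of V \<kappa>\<^sub>2 t x)\<^sup>2
      \<le> f x * indicator {0..1} x * (sigma_of V \<kappa>\<^sub>1 t x)\<^sup>2" for x
    using sq_le[of x] f_nonneg[of x] by (auto simp: indicator_def intro: mult_left_mono)
  show "f x * indicator {0..1} x * (sigma_of V \<kappa>\<^sub>2 t x)\<^sup>2
      < f x * indicator {0..1} x * (sigma_of V \<kappa>\<^sub>1 t x)\<^sup>2" if "x \<in> {t<..<1}" for x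
    using that t sq_less[of x] f_pos[of x] by simp
qed (use t msq_integrand_integrable[OF assms(1) \<kappa>(1)] msq_integrand_integrable[OF assms(2) \<kappa>(2)]
     in auto)

lemma contrast_integrand_integrable:
  assumes [measurable]: "\<kappa>\<^sub>0 \<in> borel_measurable borel" "\<kappa> \<in> borel_measurable borel"
    and \<kappa>: "range \<kappa>\<^sub>0 \<subseteq> {0..C\<^sub>0}" "range \<kappa> \<subseteq> {0..C}" and "0 < \<epsilon>"
  shows "integrable lborel (\<lambda>t. indicator {0<..<1} t * qlik \<epsilon> (msq_sigma V f \<kappa>\<^sub>0 t) (msq_sigma V f \<kappa> t))"
proof (rule integrable_bounded_on_Ioo)
  show "(\<lambda>t. qlik \<epsilon> (msq_sigma V f \<kappa>\<^sub>0 t) (msq_sigma V f \<kappa> t)) \<in> borel_measurable borel"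
    unfolding qlik_def by measurable
  show "\<bar>qlik \<epsilon> (msq_sigma V f \<kappa>\<^sub>0 t) (msq_sigma V f \<kappa> t)\<bar> \<le>
      \<bar>ln \<epsilon>\<bar> + (C * B)\<^sup>2 * integral\<^sup>L lborel f + \<epsilon> + ((C\<^sub>0 * B)\<^sup>2 * integral\<^sup>L lborel f + \<epsilon>) / \<epsilon>"
    if "t \<in> {0<..<1}" for t
    using that \<open>0 < \<epsilon>\<close>
    by (intro abs_qlik_le msq_sigma_range[OF assms(2) \<kappa>(2)] msq_sigma_range[OF assms(1) \<kappa>(1)]) auto
qed

lemma contrast_le:
  assumes [measurable]: "\<kappa>\<^sub>0 \<in> borel_measurable borel" "\<kappa> \<in> borel_measurable borel"
    and \<kappa>: "range \<kappa>\<^sub>0 \<subseteq> {0..C\<^sub>0}" "range \<kappa> \<subseteq> {0..C}" and "0 < \<epsilon>"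
  shows "contrast V f \<kappa>\<^sub>0 \<kappa>\<^sub>0 \<epsilon> \<le> contrast V f \<kappa>\<^sub>0 \<kappa> \<epsilon>"
  unfolding contrast_def
proof (rule integral_mono)
  show "indicator {0<..<1} t * qlik \<epsilon> (msq_sigma V f \<kappa>\<^sub>0 t) (msq_sigma V f \<kappa>\<^sub>0 t)
      \<le> indicator {0<..<1} t * qlik \<epsilon> (msq_sigma V f \<kappa>\<^sub>0 t) (msq_sigma V f \<kappa> t)" for t
    using msq_sigma_range[OF assms(1) \<kappa>(1), of t] msq_sigma_range[OF assms(2) \<kappa>(2), of t] \<open>0 < \<epsilon>\<close>
    by (auto simp: indicator_def intro!: qlik_ge)
qed (use contrast_integrand_integrable[OF assms(1,1) \<kappa>(1,1) \<open>0 < \<epsilon>\<close>]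
     contrast_integrand_integrable[OF assms] in auto)

lemma contrast_less:
  assumes [measurable]: "\<kappa>\<^sub>0 \<in> borel_measurable borel" "\<kappa> \<in> borel_measurable borel"
    and \<kappa>: "range \<kappa>\<^sub>0 \<subseteq> {0..C\<^sub>0}" "range \<kappa> \<subseteq> {0..C}" and "0 < \<epsilon>" and "0 < \<delta>"
    and sign: "(\<forall>r\<in>{0<..<\<delta>}. \<kappa>\<^sub>0 r < \<kappa> r) \<or> (\<forall>r\<in>{0<..<\<delta>}. \<kappa> r < \<kappa>\<^sub>0 r)"
  shows "contrast V f \<kappa>\<^sub>0 \<kappa>\<^sub>0 \<epsilon> < contrast V f \<kappa>\<^sub>0 \<kappa> \<epsilon>"
  unfolding contrast_def
proof (rule integral_less_of_less_on_Ioo[where a="max 0 (1 - \<delta>)" and b=1])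
  have range: "msq_sigma V f \<kappa>\<^sub>0 t \<ge> 0" "msq_sigma V f \<kappa> t \<ge> 0" if "t \<in> {0..1}" for t
    using msq_sigma_range[OF assms(1) \<kappa>(1) that] msq_sigma_range[OF assms(2) \<kappa>(2) that] by auto
  show "indicator {0<..<1} t * qlik \<epsilon> (msq_sigma V f \<kappa>\<^sub>0 t) (msq_sigma V f \<kappa>\<^sub>0 t)
      \<le> indicator {0<..<1} t * qlik \<epsilon> (msq_sigma V f \<kappa>\<^sub>0 t) (msq_sigma V f \<kappa> t)" for t
    using range[of t] \<open>0 < \<epsilon>\<close> by (auto simp: indicator_def intro!: qlik_ge)
  show "indicator {0<..<1} t * qlik \<epsilon> (msq_sigma V f \<kappa>\<^sub>0 t) (msq_sigma V f \<kappa>\<^sub>0 t)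
      < indicator {0<..<1} t * qlik \<epsilon> (msq_sigma V f \<kappa>\<^sub>0 t) (msq_sigma V f \<kappa> t)"
    if t: "t \<in> {max 0 (1 - \<delta>)<..<1}" for t
  proof -
    have "t \<in> {0..<1}" "1 \<le> t + \<delta>"
      using t by auto
    then have "msq_sigma V f \<kappa> t \<noteq> msq_sigma V f \<kappa>\<^sub>0 t"
      using sign msq_sigma_strict_mono[OF assms(1,2) \<kappa>(1,2)] msq_sigma_strict_mono[OF assms(2,1) \<kappa>(2,1)]
      by (metis less_irrefl)
    then show ?thesis
      using t range[of t] \<open>0 < \<epsilon>\<close> by (auto intro!: qlik_less)
  qed
qed (use \<open>0 < \<delta>\<close> contrast_integrand_integrable[OF assms(1,1) \<kappa>(1,1) \<open>0 < \<epsilon>\<close>]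
     contrast_integrand_integrable[OF assms(1-5)] in auto)

end

section \<open>The lognormal weight\<close>

text \<open>
  \<open>\<integral>\<^sub>0\<^sup>t \<kappa>(u - s) dw(s)\<close> after integration by parts, \<open>\<kappa>'\<close> being the derivative of \<open>\<kappa>\<close>
  (as in \<open>wiener_int\<close>).
\<close>

definition pathwise_wiener :: "(real \<Rightarrow> real) \<Rightarrow> (real \<Rightarrow> real) \<Rightarrow> (real \<Rightarrow> real) \<Rightarrow> real \<Rightarrow> real \<Rightarrow> real" where
  "pathwise_wiener w \<kappa> \<kappa>' t u =
     \<kappa> (u - t) * w t - \<kappa> u * w 0 + (LINT s|lborel. indicator {0<..<t} s * (w s * \<kappa>' (u - s)))"

definition lognormal_weight ::
  "(real \<Rightarrow> real) \<Rightarrow> (real \<Rightarrow> real) \<Rightarrow> (real \<Rightarrow> real) \<Rightarrow> (real \<Rightarrow> real) \<Rightarrow> real \<Rightarrow> real \<Rightarrow> real" where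
  "lognormal_weight v\<^sub>0 w \<kappa> \<kappa>' t u =
     (if t \<le> u
      then v\<^sub>0 u * exp (pathwise_wiener w \<kappa> \<kappa>' t u
        - 1/2 * (LINT s|lborel. indicator {0<..<t} s * (\<kappa> (u - s))\<^sup>2))
      else 0)"

lemma abs_pathwise_wiener_le:
  assumes [measurable]: "w \<in> borel_measurable borel" "\<kappa>' \<in> borel_measurable borel"
    and w: "\<And>s. \<bar>w s\<bar> \<le> C\<^sub>w" and \<kappa>: "\<And>r. \<bar>\<kappa> r\<bar> \<le> C\<^sub>\<kappa>" and \<kappa>': "\<And>r. \<bar>\<kappa>' r\<bar> \<le> C\<^sub>\<kappa>'"
    and t: "t \<in> {0..1}"
  shows "\<bar>pathwise_wiener w \<kappa> \<kappa>' t u\<bar> \<le> 2 * C\<^sub>\<kappa> * C\<^sub>w + C\<^sub>w * C\<^sub>\<kappa>'"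
proof -
  have "0 \<le> C\<^sub>w" "0 \<le> C\<^sub>\<kappa>" "0 \<le> C\<^sub>\<kappa>'"
    using w[of 0] \<kappa>[of 0] \<kappa>'[of 0] by auto
  have "\<bar>LINT s|lborel. indicator {0<..<t} s * (w s * \<kappa>' (u - s))\<bar> \<le> C\<^sub>w * C\<^sub>\<kappa>' * (t - 0)"
    using t w \<kappa>' \<open>0 \<le> C\<^sub>w\<close> by (intro abs_integral_bounded_on_Ioo) (auto simp: abs_mult intro!: mult_mono)
  also have "\<dots> \<le> C\<^sub>w * C\<^sub>\<kappa>'"
    using t \<open>0 \<le> C\<^sub>w\<close> \<open>0 \<le> C\<^sub>\<kappa>'\<close> by (simp add: mult_left_le)
  finally have "\<bar>LINT s|lborel. indicator {0<..<t} s * (w s * \<kappa>' (u - s))\<bar> \<le> C\<^sub>w * C\<^sub>\<kappa>'" .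
  moreover have "\<bar>\<kappa> (u - t) * w t\<bar> \<le> C\<^sub>\<kappa> * C\<^sub>w" "\<bar>\<kappa> u * w 0\<bar> \<le> C\<^sub>\<kappa> * C\<^sub>w"
    using w \<kappa> \<open>0 \<le> C\<^sub>w\<close> \<open>0 \<le> C\<^sub>\<kappa>\<close> by (auto simp: abs_mult intro!: mult_mono)
  ultimately show ?thesis
    unfolding pathwise_wiener_def by linarith
qed

lemma bounded_weight_lognormal_weight:
  assumes [measurable]: "v\<^sub>0 \<in> borel_measurable borel" "w \<in> borel_measurable borel"
      "\<kappa> \<in> borel_measurable borel" "\<kappa>' \<in> borel_measurable borel"
    and v\<^sub>0: "\<And>u. v\<^sub>0 u \<in> {0<..C\<^sub>v}"
    and w: "\<And>s. \<bar>w s\<bar> \<le> C\<^sub>w" and \<kappa>: "\<And>r. \<bar>\<kappa> r\<bar> \<le> C\<^sub>\<kappa>" and \<kappa>': "\<And>r. \<bar>\<kappa>' r\<bar> \<le> C\<^sub>\<kappa>'"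
  shows "bounded_weight (lognormal_weight v\<^sub>0 w \<kappa> \<kappa>') (C\<^sub>v * exp (2 * C\<^sub>\<kappa> * C\<^sub>w + C\<^sub>w * C\<^sub>\<kappa>'))"
proof
  show "case_prod (lognormal_weight v\<^sub>0 w \<kappa> \<kappa>') \<in> borel_measurable (borel \<Otimes>\<^sub>M borel)"
    unfolding lognormal_weight_def pathwise_wiener_def by measurable
  show "0 < lognormal_weight v\<^sub>0 w \<kappa> \<kappa>' t u" if "t \<le> u" for t u
    using that v\<^sub>0[of u] by (simp add: lognormal_weight_def)
  show "lognormal_weight v\<^sub>0 w \<kappa> \<kappa>' t u \<in> {0..C\<^sub>v * exp (2 * C\<^sub>\<kappa> * C\<^sub>w + C\<^sub>w * C\<^sub>\<kappa>')}"
    if t: "t \<in> {0..1}" for t u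
  proof (cases "t \<le> u")
    case True
    let ?Q = "LINT s|lborel. indicator {0<..<t} s * (\<kappa> (u - s))\<^sup>2"
    have "0 \<le> ?Q"
      by (intro Bochner_Integration.integral_nonneg) auto
    then have "pathwise_wiener w \<kappa> \<kappa>' t u - 1/2 * ?Q \<le> 2 * C\<^sub>\<kappa> * C\<^sub>w + C\<^sub>w * C\<^sub>\<kappa>'"
      using abs_le_D1[OF abs_pathwise_wiener_le[where \<kappa>=\<kappa> and u=u, OF assms(2,4) w \<kappa> \<kappa>' t]] by linarith
    then show ?thesis
      using True v\<^sub>0[of u] by (auto simp: lognormal_weight_def intro!: mult_mono)
  next
    case False
    then show ?thesis
      using v\<^sub>0[of u] by (simp add: lognormal_weight_def)
  qed
qed

section \<open>The model along a continuous path\<close>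

definition clamp01 :: "real \<Rightarrow> real" where
  "clamp01 x = max 0 (min 1 x)"

lemma clamp01_id: "x \<in> {0..1} \<Longrightarrow> clamp01 x = x"
  by (simp add: clamp01_def)

lemma clamp01_in: "clamp01 x \<in> {0..1}"
  by (simp add: clamp01_def)

lemma continuous_on_comp_clamp01:
  fixes g :: "real \<Rightarrow> real"
  assumes "continuous_on {0..1} g"
  shows "g \<circ> clamp01 \<in> borel_measurable borel" "\<exists>C. \<forall>x. \<bar>g (clamp01 x)\<bar> \<le> C"
proof -
  have "continuous_on UNIV (g \<circ> clamp01)"
    by (rule continuous_on_compose[OF _ continuous_on_subset[OF assms]])
       (auto simp: clamp01_def intro!: continuous_intros)
  then show "g \<circ> clamp01 \<in> borel_measurable borel"
    by (rule borel_measurable_continuous_onI)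
  have "bounded (g ` {0..1})"
    by (intro compact_imp_bounded compact_continuous_image assms) auto
  then obtain C where "\<forall>y\<in>g ` {0..1}. \<bar>y\<bar> \<le> C"
    unfolding bounded_real by auto
  then show "\<exists>C. \<forall>x. \<bar>g (clamp01 x)\<bar> \<le> C"
    using clamp01_in by blast
qed

lemma C22_on_continuous_on:
  fixes k :: "'p::euclidean_space \<Rightarrow> real \<Rightarrow> real"
  assumes "C22_on k \<Theta> {0..1}" "\<xi> \<in> \<Theta>"
  shows "continuous_on {0..1} (k \<xi>)" "continuous_on {0..1} (kdot k \<xi>)"
proof -
  obtain S K where S: "\<Theta> \<times> {0..1} \<subseteq> S" and K: "\<forall>x\<in>\<Theta>. \<forall>t\<in>{0..1}. K x t = k x t"
    and cont: "\<forall>ds. admissible22 ds \<longrightarrow> continuous_on S (\<lambda>z. papply K ds (fst z) (snd z))"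
    and diff: "\<forall>d ds. admissible22 (d # ds) \<longrightarrow> (\<forall>z\<in>S. pdir_differentiable (papply K ds) d (fst z) (snd z))"
    using assms(1) unfolding C22_on_def by blast
  have adm: "admissible22 ([] :: 'p option list)" "admissible22 [None :: 'p option]"
    by (simp_all add: admissible22_def)
  have sub: "(\<lambda>r. (\<xi>, r)) ` {0..1} \<subseteq> S"
    using S assms(2) by auto
  have slice: "continuous_on {0..1} (\<lambda>r. (\<xi>, r))"
    by (intro continuous_intros)
  have K\<xi>: "K \<xi> r = k \<xi> r" if "r \<in> {0..1}" for r
    using K assms(2) that by blast
  have "continuous_on {0..1} (\<lambda>r. K \<xi> r)"
    using continuous_on_compose2[OF cont[rule_format, OF adm(1)] slice sub] by simp
  then show "continuous_on {0..1} (k \<xi>)"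
    by (rule continuous_on_eq) (rule K\<xi>)
  have "continuous_on {0..1} (\<lambda>r. deriv (\<lambda>s. K \<xi> s) r)"
    using continuous_on_compose2[OF cont[rule_format, OF adm(2)] slice sub] by (simp add: pdir_def)
  moreover have "deriv (\<lambda>s. K \<xi> s) r = kdot k \<xi> r" if r: "r \<in> {0..1}" for r
  proof -
    have "(\<xi>, r) \<in> S"
      using sub r by auto
    then have "(\<lambda>s. K \<xi> s) field_differentiable (at r)"
      using diff[rule_format, OF adm(2), of "(\<xi>, r)"] by (simp add: pdir_differentiable_def)
    then have "((\<lambda>s. K \<xi> s) has_vector_derivative deriv (\<lambda>s. K \<xi> s) r) (at r within {0..1})"
      by (simp add: DERIV_deriv_iff_field_differentiable[symmetric]
          has_real_derivative_iff_has_vector_derivative has_vector_derivative_at_within)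
    then have "(k \<xi> has_vector_derivative deriv (\<lambda>s. K \<xi> s) r) (at r within {0..1})"
      by (rule has_vector_derivative_transform[OF r K\<xi>[symmetric], rotated])
    then show ?thesis
      unfolding kdot_def by (intro vector_derivative_within_closed_interval[OF _ r, symmetric]) auto
  qed
  ultimately show "continuous_on {0..1} (kdot k \<xi>)"
    by (rule continuous_on_eq)
qed

text \<open>
  \<open>V\<^sub>t\<^sup>u\<close> along the path \<open>\<omega>\<close>, with all data composed with \<open>clamp01\<close>: this leaves them unchanged
  on \<open>[0, 1]\<close> and makes them globally bounded Borel functions.
\<close>

definition path_weight ::
  "('p \<Rightarrow> real \<Rightarrow> real) \<Rightarrow> 'p \<Rightarrow> (real \<Rightarrow> real) \<Rightarrow> (real \<Rightarrow> 'a \<Rightarrow> real) \<Rightarrow> 'a \<Rightarrow> real \<Rightarrow> real \<Rightarrow> real" where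
  "path_weight k \<theta> V0 W \<omega> =
     lognormal_weight (V0 \<circ> clamp01) (\<lambda>s. W (clamp01 s) \<omega>) (k \<theta> \<circ> clamp01) (kdot k \<theta> \<circ> clamp01)"

lemma bounded_weight_path_weight:
  assumes "continuous_on {0..1} (\<lambda>t. W t \<omega>)" "continuous_on {0..1} V0" "\<forall>u\<in>{0..1}. 0 < V0 u"
    and "C22_on k \<Theta> {0..1}" "\<theta> \<in> \<Theta>"
  shows "\<exists>B. bounded_weight (path_weight k \<theta> V0 W \<omega>) B"
proof -
  note k\<theta> = C22_on_continuous_on[OF assms(4,5)]
  obtain C\<^sub>w where "\<And>s. \<bar>W (clamp01 s) \<omega>\<bar> \<le> C\<^sub>w"
    using continuous_on_comp_clamp01(2)[OF assms(1)] by blast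
  moreover obtain C\<^sub>\<kappa> where "\<And>r. \<bar>(k \<theta> \<circ> clamp01) r\<bar> \<le> C\<^sub>\<kappa>"
    using continuous_on_comp_clamp01(2)[OF k\<theta>(1)] by auto
  moreover obtain C\<^sub>\<kappa>' where "\<And>r. \<bar>(kdot k \<theta> \<circ> clamp01) r\<bar> \<le> C\<^sub>\<kappa>'"
    using continuous_on_comp_clamp01(2)[OF k\<theta>(2)] by auto
  moreover obtain C\<^sub>v where "\<And>u. (V0 \<circ> clamp01) u \<in> {0<..C\<^sub>v}"
    using continuous_on_comp_clamp01(2)[OF assms(2)] assms(3) clamp01_in by (fastforce simp: abs_le_iff)
  moreover have "(\<lambda>s. W (clamp01 s) \<omega>) \<in> borel_measurable borel"
    using continuous_on_comp_clamp01(1)[OF assms(1)] by (simp add: comp_def)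
  ultimately show ?thesis
    unfolding path_weight_def
    by (blast intro: bounded_weight_lognormal_weight continuous_on_comp_clamp01(1) assms(2) k\<theta>)
qed

lemma Vproc_eq_path_weight:
  assumes "0 \<le> t" "u \<le> 1"
  shows "Vproc k \<theta> V0 W t u \<omega> = path_weight k \<theta> V0 W \<omega> t u"
proof (cases "t \<le> u")
  case True
  have "(LBINT s=0..t. W s \<omega> * kdot k \<theta> (u - s))
      = (LINT s|lborel. indicator {0<..<t} s * (W (clamp01 s) \<omega> * (kdot k \<theta> \<circ> clamp01) (u - s)))"
    using interval_integral_eq_indicator[OF assms(1)] assms True
    by (auto simp: zero_ereal_def indicator_def clamp01_id intro!: Bochner_Integration.integral_cong)
  moreover have "(LBINT s=0..t. (k \<theta> (u - s))\<^sup>2)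
      = (LINT s|lborel. indicator {0<..<t} s * ((k \<theta> \<circ> clamp01) (u - s))\<^sup>2)"
    using interval_integral_eq_indicator[OF assms(1)] assms True
    by (auto simp: zero_ereal_def indicator_def clamp01_id intro!: Bochner_Integration.integral_cong)
  ultimately show ?thesis
    using assms True
    by (simp add: Vproc_def path_weight_def lognormal_weight_def wiener_int_def pathwise_wiener_def
        clamp01_id)
qed (simp add: Vproc_def path_weight_def lognormal_weight_def)

lemma sigma_fwd_eq_indefinite_integral:
  "sigma_fwd k \<theta> V0 W t x \<xi> \<omega> =
     (LINT u|lborel. indicator {t<..<x} u * (k \<xi> (u - t) * Vproc k \<theta> V0 W t u \<omega>))"
  by (simp add: sigma_fwd_def interval_integral_eq_indicator)

lemma sigma_fwd_eq_sigma_of: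
  assumes "0 \<le> t" "x \<le> 1"
  shows "sigma_fwd k \<theta> V0 W t x \<xi> \<omega> = sigma_of (path_weight k \<theta> V0 W \<omega>) (k \<xi> \<circ> clamp01) t x"
  unfolding sigma_fwd_eq_indefinite_integral sigma_of_def using assms
  by (intro Bochner_Integration.integral_cong) (auto simp: indicator_def clamp01_id Vproc_eq_path_weight)

lemma integral_sigma_fwd_sq_eq_msq_sigma:
  assumes \<mu>: "\<mu> = density lborel f" and [measurable]: "f \<in> borel_measurable lborel"
    and f: "\<And>x. 0 \<le> f x" "\<And>x. x \<notin> {0..1} \<Longrightarrow> f x = 0" and "0 \<le> t"
  shows "(\<integral>x. (sigma_fwd k \<theta> V0 W t x \<xi> \<omega>)\<^sup>2 \<partial>\<mu>) =
    msq_sigma (path_weight k \<theta> V0 W \<omega>) f (k \<xi> \<circ> clamp01) t"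
proof -
  \<comment> \<open>for \<open>x > 1\<close> the integrand involves \<open>k\<close> and \<open>V0\<close> outside \<open>[0, 1]\<close>, where nothing is known\<close>
  have "(\<lambda>x. sigma_fwd k \<theta> V0 W t x \<xi> \<omega>) \<in> borel_measurable borel"
    unfolding sigma_fwd_eq_indefinite_integral by (rule borel_measurable_indefinite_integral)
  then have "(\<integral>x. (sigma_fwd k \<theta> V0 W t x \<xi> \<omega>)\<^sup>2 \<partial>\<mu>) =
      (LINT x|lborel. f x * (sigma_fwd k \<theta> V0 W t x \<xi> \<omega>)\<^sup>2)"
    unfolding \<mu> using f(1) by (subst integral_density) auto
  also have "\<dots> = msq_sigma (path_weight k \<theta> V0 W \<omega>) f (k \<xi> \<circ> clamp01) t"
    unfolding msq_sigma_def using f(2)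
    by (intro Bochner_Integration.integral_cong)
       (auto simp: indicator_def sigma_fwd_eq_sigma_of[OF \<open>0 \<le> t\<close>])
  finally show ?thesis .
qed

lemma Ueps_eq_contrast:
  assumes "\<mu> = density lborel f" "f \<in> borel_measurable lborel"
    and "\<And>x. 0 \<le> f x" "\<And>x. x \<notin> {0..1} \<Longrightarrow> f x = 0"
  shows "Ueps k \<theta> V0 W \<mu> \<epsilon> \<xi> \<omega> =
    contrast (path_weight k \<theta> V0 W \<omega>) f (k \<theta> \<circ> clamp01) (k \<xi> \<circ> clamp01) \<epsilon>"
proof -
  have "(LBINT t=0..1. g t) = (LINT t|lborel. indicator {0<..<1} t * g t)" for g :: "real \<Rightarrow> real"
    using interval_integral_eq_indicator[of 0 1 g] by (simp add: zero_ereal_def one_ereal_def)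
  moreover have "(\<integral>x. (sigma_fwd k \<theta> V0 W t x \<eta> \<omega>)\<^sup>2 \<partial>\<mu>) =
      msq_sigma (path_weight k \<theta> V0 W \<omega>) f (k \<eta> \<circ> clamp01) t" if "0 < t" for t \<eta>
    using integral_sigma_fwd_sq_eq_msq_sigma[where \<xi>=\<eta>, OF assms less_imp_le[OF that]] .
  ultimately show ?thesis
    unfolding Ueps_def contrast_def qlik_def
    by (auto simp: indicator_def intro!: Bochner_Integration.integral_cong)
qed



lemma kernel_comp_clamp01:
  assumes "C22_on k \<Theta> {0..1}" "\<forall>\<xi>\<in>\<Theta>. \<forall>t\<in>{0..1}. 0 < k \<xi> t" "\<xi> \<in> \<Theta>"
  shows "k \<xi> \<circ> clamp01 \<in> borel_measurable borel" "\<exists>C. range (k \<xi> \<circ> clamp01) \<subseteq> {0..C}"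
proof -
  note k\<xi> = C22_on_continuous_on(1)[OF assms(1,3)]
  show "k \<xi> \<circ> clamp01 \<in> borel_measurable borel"
    by (rule continuous_on_comp_clamp01(1)[OF k\<xi>])
  obtain C where "\<And>x. \<bar>k \<xi> (clamp01 x)\<bar> \<le> C"
    using continuous_on_comp_clamp01(2)[OF k\<xi>] by blast
  moreover have "\<And>x. 0 < k \<xi> (clamp01 x)"
    using assms(2,3) clamp01_in by blast
  ultimately show "\<exists>C. range (k \<xi> \<circ> clamp01) \<subseteq> {0..C}"
    by (intro exI[of _ C]) (auto simp: abs_le_iff less_imp_le)
qed

lemma Ueps_argmin_of_continuous_path:
  fixes k :: "'p::euclidean_space \<Rightarrow> real \<Rightarrow> real" and f :: "real \<Rightarrow> real"
  assumes \<theta>: "\<theta> \<in> \<Theta>"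
    and V0: "continuous_on {0..1} V0" "\<forall>u\<in>{0..1}. V0 u > 0"
    and H1: "C22_on k \<Theta> {0..1}" "\<forall>\<xi>\<in>\<Theta>. \<forall>t\<in>{0..1}. k \<xi> t > 0"
    and H2: "\<forall>\<xi>\<in>\<Theta>. \<forall>\<xi>'\<in>\<Theta>. \<xi> \<noteq> \<xi>' \<longrightarrow> (\<exists>\<delta>>0. \<delta> \<le> 1 \<and>
               ((\<forall>t\<in>{0<..<\<delta>}. k \<xi> t - k \<xi>' t > 0) \<or> (\<forall>t\<in>{0<..<\<delta>}. k \<xi> t - k \<xi>' t < 0)))"
    and \<mu>: "\<mu> = density lborel f" "f \<in> borel_measurable lborel"
      "\<forall>x\<in>{0..1}. f x > 0" "\<forall>x. x \<notin> {0..1} \<longrightarrow> f x = 0" "integrable lborel f"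
    and path: "continuous_on {0..1} (\<lambda>t. W t \<omega>)"
    and "0 < \<epsilon>"
  shows "{\<xi>\<in>\<Theta>. \<forall>\<eta>\<in>\<Theta>. Ueps k \<theta> V0 W \<mu> \<epsilon> \<xi> \<omega> \<le> Ueps k \<theta> V0 W \<mu> \<epsilon> \<eta> \<omega>} = {\<theta>}"
proof -
  have f_nonneg: "0 \<le> f x" for x
    using \<mu>(3,4) by (cases "x \<in> {0..1}") (auto simp: less_imp_le)
  obtain B where "bounded_weight (path_weight k \<theta> V0 W \<omega>) B"
    using bounded_weight_path_weight[where W=W and \<omega>=\<omega>, OF path V0 H1(1) \<theta>] by blast
  then interpret contrast_setting "path_weight k \<theta> V0 W \<omega>" B f
    by (rule contrast_setting.intro) (unfold_locales, use \<mu> f_nonneg in auto)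
  have U: "Ueps k \<theta> V0 W \<mu> \<epsilon> \<xi> \<omega> =
      contrast (path_weight k \<theta> V0 W \<omega>) f (k \<theta> \<circ> clamp01) (k \<xi> \<circ> clamp01) \<epsilon>" for \<xi>
    using \<mu>(4) by (intro Ueps_eq_contrast[OF \<mu>(1,2) f_nonneg]) auto
  note \<kappa> = kernel_comp_clamp01[OF H1]
  obtain C\<^sub>\<theta> where C\<^sub>\<theta>: "range (k \<theta> \<circ> clamp01) \<subseteq> {0..C\<^sub>\<theta>}"
    using \<kappa>(2)[OF \<theta>] by blast
  have minimal: "Ueps k \<theta> V0 W \<mu> \<epsilon> \<theta> \<omega> \<le> Ueps k \<theta> V0 W \<mu> \<epsilon> \<eta> \<omega>" if \<eta>: "\<eta> \<in> \<Theta>" for \<eta>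
  proof -
    obtain C where "range (k \<eta> \<circ> clamp01) \<subseteq> {0..C}"
      using \<kappa>(2)[OF \<eta>] by blast
    then show ?thesis
      unfolding U by (intro contrast_le[OF \<kappa>(1)[OF \<theta>] \<kappa>(1)[OF \<eta>] C\<^sub>\<theta>] \<open>0 < \<epsilon>\<close>)
  qed
  have strict: "Ueps k \<theta> V0 W \<mu> \<epsilon> \<theta> \<omega> < Ueps k \<theta> V0 W \<mu> \<epsilon> \<xi> \<omega>" if \<xi>: "\<xi> \<in> \<Theta>" "\<xi> \<noteq> \<theta>" for \<xi>
  proof -
    obtain C where C: "range (k \<xi> \<circ> clamp01) \<subseteq> {0..C}"
      using \<kappa>(2)[OF \<xi>(1)] by blast
    obtain \<delta> where "0 < \<delta>" "\<delta> \<le> 1"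
      and "(\<forall>r\<in>{0<..<\<delta>}. k \<xi> r - k \<theta> r > 0) \<or> (\<forall>r\<in>{0<..<\<delta>}. k \<xi> r - k \<theta> r < 0)"
      using H2 \<xi> \<theta> by blast
    moreover have clamp: "(k \<eta> \<circ> clamp01) r = k \<eta> r" if "r \<in> {0<..<\<delta>}" for r \<eta>
      using that \<open>\<delta> \<le> 1\<close> by (simp add: clamp01_id)
    ultimately have "(\<forall>r\<in>{0<..<\<delta>}. (k \<theta> \<circ> clamp01) r < (k \<xi> \<circ> clamp01) r)
        \<or> (\<forall>r\<in>{0<..<\<delta>}. (k \<xi> \<circ> clamp01) r < (k \<theta> \<circ> clamp01) r)"
      by (simp only: clamp diff_gt_0_iff_gt diff_less_0_iff_less cong: ball_cong)
    then show ?thesis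
      unfolding U by (rule contrast_less[OF \<kappa>(1)[OF \<theta>] \<kappa>(1)[OF \<xi>(1)] C\<^sub>\<theta> C \<open>0 < \<epsilon>\<close> \<open>0 < \<delta>\<close>])
  qed
  show ?thesis
    using \<theta> minimal strict by (rule minimizers_eq_singleton)
qed

theorem mainTheorem18:
  fixes M :: "'a measure" and F :: "real \<Rightarrow> 'a measure" and W :: "real \<Rightarrow> 'a \<Rightarrow> real"
    and \<Theta> :: "'p::euclidean_space set" and k :: "'p \<Rightarrow> real \<Rightarrow> real" and \<theta> :: 'p
    and V0 :: "real \<Rightarrow> real" and \<mu> :: "real measure" and f :: "real \<Rightarrow> real"
  assumes Theta: "compact \<Theta>" "convex \<Theta>" "\<theta> \<in> \<Theta>"
    and BM: "std_BM M F W"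
    and V0: "continuous_on {0..1} V0" "\<forall>u\<in>{0..1}. V0 u > 0"
    and H1: "C22_on k \<Theta> {0..1}" "\<forall>\<xi>\<in>\<Theta>. \<forall>t\<in>{0..1}. k \<xi> t > 0"
    and H2: "\<forall>\<xi>\<in>\<Theta>. \<forall>\<xi>'\<in>\<Theta>. \<xi> \<noteq> \<xi>' \<longrightarrow> (\<exists>\<delta>>0. \<delta> \<le> 1 \<and>
               ((\<forall>t\<in>{0<..<\<delta>}. k \<xi> t - k \<xi>' t > 0) \<or> (\<forall>t\<in>{0<..<\<delta>}. k \<xi> t - k \<xi>' t < 0)))"
    and mu: "prob_space \<mu>" "\<mu> = density lborel f" "f \<in> borel_measurable lborel"
      "\<forall>x\<in>{0..1}. f x > 0" "\<forall>x. x \<notin> {0..1} \<longrightarrow> f x = 0"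
  shows "AE \<omega> in M. \<forall>\<epsilon>>0.
           {\<xi>\<in>\<Theta>. \<forall>\<eta>\<in>\<Theta>. Ueps k \<theta> V0 W \<mu> \<epsilon> \<xi> \<omega> \<le> Ueps k \<theta> V0 W \<mu> \<epsilon> \<eta> \<omega>} = {\<theta>}"
proof -
  have "0 \<le> f x" for x
    using mu(4,5) by (cases "x \<in> {0..1}") (auto simp: less_imp_le)
  then have f_integrable: "integrable lborel f"
    using mu(1-3) by (intro integrable_of_prob_space_density) auto
  have "AE \<omega> in M. continuous_on {0..1} (\<lambda>t. W t \<omega>)"
    using BM unfolding std_BM_def by blast
  then show ?thesis
  proof (rule eventually_mono)
    fix \<omega> assume "continuous_on {0..1} (\<lambda>t. W t \<omega>)"
    then show "\<forall>\<epsilon>>0. {\<xi>\<in>\<Theta>. \<forall>\<eta>\<in>\<Theta>. Ueps k \<theta> V0 W \<mu> \<epsilon> \<xi> \<omega> \<le> Ueps k \<theta> V0 W \<mu> \<epsilon> \<eta> \<omega>} = {\<theta>}"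
      by (simp add: Ueps_argmin_of_continuous_path[OF Theta(3) V0 H1 H2 mu(2-5) f_integrable])
  qed
qed

end
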